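(* Let $a,b,d<0$ be fixed real numbers. Then there exists $c^*\in\mathbb{R}$ such that for every real $c>c^*$, every polynomial $W_n(z)$ ($n\ge0$) of the normalised sequence defined below is real-rooted.
   Context: Put $A(z)=az+b$, $B(z)=cz+d$ with $c\in\mathbb{R}$, $c\ne0$. The normalised sequence $\{W_n(z)\}_{n\ge0}$ is defined by $W_0(z)=1$, $W_1(z)=z$ and $W_n(z)=A(z)W_{n-1}(z)+B(z)W_{n-2}(z)$ for $n\ge2$. Real-rooted means all zeros are real. *)

theory Defs
  imports "HOL-Computational_Algebra.Polynomial"
begin

text \<open>The normalised sequence: W_0 = 1, W_1 = z,
  W_n = A W_(n-1) + B W_(n-2) with A(z) = a z + b, B(z) = c z + d.\<close>
fun W :: "real \<Rightarrow> real \<Rightarrow> real \<Rightarrow> real \<Rightarrow> nat \<Rightarrow> real poly" where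
  "W a b c d 0 = 1"
| "W a b c d (Suc 0) = [:0, 1:]"
| "W a b c d (Suc (Suc n)) =
     [:b, a:] * W a b c d (Suc n) + [:d, c:] * W a b c d n"

definition real_rooted :: "real poly \<Rightarrow> bool" where
  "real_rooted p \<longleftrightarrow> (\<forall>z::complex. poly (map_poly complex_of_real p) z = 0 \<longrightarrow> z \<in> \<real>)"

end

theory Submission
  imports Defs
begin

(* Let z0 = -d/c be the zero of B. There the recurrence collapses to W n z0 = A(z0)^(n-1) z0,
   so the signs of W n z0 alternate in n; for c large the signs at p = 2 z0 alternate with the
   opposite parity, so W n has a root in (z0, p) and one in (p, \<infinity>).
   At a root y < z0 of W (n+1) the recurrence reads W (n+2) y = B(y) W n y with B(y) < 0.
   Hence, if the roots of W (n+1) below z0 interlace with those of W n, the values of W (n+2)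
   alternate in sign along them, and the intermediate value theorem gives n roots of W (n+2)
   below z0 interlacing with those of W (n+1). With the two roots above z0 these are
   n + 2 = deg W (n+2) distinct real roots. *)

lemma mult_neg_if_alternating_signs:
  fixes x y :: real
  assumes "(-1) ^ k * x > 0" and "(-1) ^ Suc k * y > 0"
  shows "x * y < 0"
  using assms by (cases "even k") (auto simp: mult_pos_neg mult_neg_pos)

lemma poly_eventually_pos_at_top:
  fixes f :: "real poly"
  assumes "lead_coeff f > 0"
  shows "\<exists>N. \<forall>x\<ge>N. poly f x > 0"
  using poly_pinfty_gt_lc[OF assms] assms by (meson less_le_trans)

lemma poly_eventually_pos_at_bot:
  fixes f :: "real poly"
  assumes "lead_coeff f * (-1) ^ degree f > 0"
  shows "\<exists>N. \<forall>x\<le>N. poly f x > 0"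
proof -
  let ?g = "pcompose f [:0, -1:]"
  have "lead_coeff ?g = lead_coeff f * (-1) ^ degree f"
    by (subst lead_coeff_comp) auto
  then obtain N where "\<forall>x\<ge>N. poly ?g x > 0"
    using poly_eventually_pos_at_top assms by metis
  then have "poly f x > 0" if "x \<le> -N" for x
    using that by (auto simp: poly_pcompose dest: spec[of _ "-x"])
  then show ?thesis by blast
qed

lemma poly_roots_eq_if_card_eq_degree:
  fixes f :: "'a::idom poly"
  assumes "f \<noteq> 0" and "finite S" and "card S = degree f" and "\<And>x. x \<in> S \<Longrightarrow> poly f x = 0"
  shows "{x. poly f x = 0} = S"
proof -
  have "S \<subseteq> {x. poly f x = 0}" using assms(4) by auto
  moreover have "card {x. poly f x = 0} \<le> card S"
    using card_poly_roots_bound[OF assms(1)] assms(3) by simp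
  ultimately show ?thesis using poly_roots_finite[OF assms(1)] by (metis card_seteq)
qed

lemma poly_map_poly_of_real:
  "poly (map_poly of_real p) (of_real x) = (of_real (poly p x) :: 'a::{real_algebra_1,comm_semiring_1})"
  by (induction p) (auto simp: map_poly_pCons)

lemma real_rooted_if_card_roots_eq_degree:
  fixes f :: "real poly"
  assumes "f \<noteq> 0" and "finite S" and "card S = degree f" and "\<And>x. x \<in> S \<Longrightarrow> poly f x = 0"
  shows "real_rooted f"
  unfolding real_rooted_def
proof (intro allI impI)
  let ?S = "complex_of_real ` S" and ?F = "map_poly complex_of_real f"
  fix z assume z: "poly ?F z = 0"
  have "?F \<noteq> 0" using assms(1) by (simp add: map_poly_eq_0_iff)
  moreover have "degree ?F = degree f" by (rule degree_map_poly) simp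
  moreover have "card ?S = card S" by (rule card_image) (simp add: inj_on_def)
  moreover have "\<And>x. x \<in> ?S \<Longrightarrow> poly ?F x = 0" using assms(4) by (auto simp: poly_map_poly_of_real)
  ultimately have "{x. poly ?F x = 0} = ?S"
    using assms(2,3) by (intro poly_roots_eq_if_card_eq_degree) auto
  then show "z \<in> \<real>" using z by (auto simp: Reals_def)
qed

lemma poly_same_sign_if_no_root_between:
  fixes f :: "real poly"
  assumes "u \<le> v" and "\<And>s. u \<le> s \<Longrightarrow> s \<le> v \<Longrightarrow> poly f s \<noteq> 0"
  shows "poly f u * poly f v > 0"
proof (cases "u = v")
  case True
  then show ?thesis using assms(2)[of u] by (auto simp: zero_less_mult_iff linorder_neq_iff)
next
  case False
  then have "u < v" using assms(1) by simp
  have "poly f u * poly f v \<noteq> 0" using assms by auto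
  moreover have "\<not> poly f u * poly f v < 0"
    using poly_IVT[OF \<open>u < v\<close>] assms(2) by fastforce
  ultimately show ?thesis by linarith
qed

lemma roots_between_alternating_signs:
  fixes f :: "real poly" and q :: "nat \<Rightarrow> real"
  assumes q_mono: "\<And>j. j < m \<Longrightarrow> q j < q (Suc j)"
    and q_sign: "\<And>j. j \<le> m \<Longrightarrow> (-1) ^ (j + 1) * poly f (q j) > 0"
  obtains x where "\<And>j. j < m \<Longrightarrow> q j < x j \<and> x j < q (Suc j) \<and> poly f (x j) = 0"
proof -
  have "\<exists>y. q j < y \<and> y < q (Suc j) \<and> poly f y = 0" if "j < m" for j
  proof -
    have "poly f (q j) * poly f (q (Suc j)) < 0"
      using q_sign[of j] q_sign[of "Suc j"] that by (intro mult_neg_if_alternating_signs[of "j + 1"]) auto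
    then show ?thesis using poly_IVT[OF q_mono[OF that]] by blast
  qed
  then show ?thesis using that by metis
qed

(* The points x 0 < ... < x (m - 1) cut {..z} into the gaps 0, ..., m; gap 0 is unbounded below. *)
definition in_gap :: "(nat \<Rightarrow> real) \<Rightarrow> nat \<Rightarrow> real \<Rightarrow> nat \<Rightarrow> real \<Rightarrow> bool" where
  "in_gap x m z j t \<longleftrightarrow> t \<le> z \<and> (j = 0 \<or> x (j - 1) < t) \<and> (j = m \<or> t < x j)"

definition signed_roots_below :: "real poly \<Rightarrow> real \<Rightarrow> nat \<Rightarrow> (nat \<Rightarrow> real) \<Rightarrow> bool" where
  "signed_roots_below f z m x \<longleftrightarrow>
     (\<forall>i<m. x i < z \<and> poly f (x i) = 0) \<and> (\<forall>i j. i < j \<longrightarrow> j < m \<longrightarrow> x i < x j) \<and>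
     (\<forall>j t. j \<le> m \<longrightarrow> in_gap x m z j t \<longrightarrow> (-1) ^ (j + 1) * poly f t > 0)"

lemma in_gap_between:
  "in_gap x m z j u \<Longrightarrow> in_gap x m z j v \<Longrightarrow> u \<le> s \<Longrightarrow> s \<le> v \<Longrightarrow> in_gap x m z j s"
  unfolding in_gap_def by auto

lemma not_in_gap_point:
  assumes x_mono: "\<And>i j. i < j \<Longrightarrow> j < m \<Longrightarrow> x i < x j"
    and "i < m" and "j \<le> m"
  shows "\<not> in_gap x m z j (x i)"
proof
  assume gap: "in_gap x m z j (x i)"
  show False
  proof (cases "i < j")
    case True
    then have "i = j - 1 \<or> i < j - 1 \<and> j - 1 < m" using assms(3) by linarith
    then have "x i \<le> x (j - 1)" using x_mono[of i "j - 1"] by auto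
    then show False using gap True unfolding in_gap_def by auto
  next
    case False
    then have "x j \<le> x i" using x_mono[of j i] assms(2) by (cases "i = j") auto
    then show False using gap False assms(2) unfolding in_gap_def by auto
  qed
qed

lemma signed_roots_below_if_alternating:
  fixes f :: "real poly" and q :: "nat \<Rightarrow> real"
  assumes "f \<noteq> 0" and "finite R" and card_R: "card R + m = degree f"
    and R: "\<And>r. r \<in> R \<Longrightarrow> q m < r \<and> poly f r = 0"
    and q_mono: "\<And>i j. i < j \<Longrightarrow> j \<le> m \<Longrightarrow> q i < q j"
    and q_sign: "\<And>j. j \<le> m \<Longrightarrow> (-1) ^ (j + 1) * poly f (q j) > 0"
  obtains x where "signed_roots_below f (q m) m x"
    and "\<And>j. j < m \<Longrightarrow> q j < x j \<and> x j < q (Suc j)" and "real_rooted f"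
proof -
  obtain x where x: "\<And>j. j < m \<Longrightarrow> q j < x j \<and> x j < q (Suc j) \<and> poly f (x j) = 0"
    using roots_between_alternating_signs[of m q f] q_mono q_sign by auto
  have q_le: "q i \<le> q j" if "i \<le> j" "j \<le> m" for i j
    using q_mono[of i j] that by (cases "i = j") auto
  have x_mono: "x i < x j" if "i < j" "j < m" for i j
    using x[of i] x[of j] q_le[of "Suc i" j] that by fastforce
  have x_below: "x i < q m" if "i < m" for i
    using x[of i] q_le[of "Suc i" m] that by fastforce
  define S where "S = R \<union> x ` {..<m}"
  have "inj_on x {..<m}"
    by (rule strict_mono_on_imp_inj_on) (auto simp: strict_mono_on_def x_mono)
  moreover have "R \<inter> x ` {..<m} = {}" using R x_below by fastforce
  ultimately have "card S = degree f"
    unfolding S_def using card_R \<open>finite R\<close> by (simp add: card_Un_disjoint card_image)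
  moreover have "finite S" and S_roots: "\<And>s. s \<in> S \<Longrightarrow> poly f s = 0"
    unfolding S_def using \<open>finite R\<close> R x by auto
  ultimately have "real_rooted f" and roots: "{s. poly f s = 0} = S"
    using \<open>f \<noteq> 0\<close> by (simp_all add: real_rooted_if_card_roots_eq_degree poly_roots_eq_if_card_eq_degree)
  have gap_sign: "(-1) ^ (j + 1) * poly f t > 0" if "j \<le> m" and t: "in_gap x m (q m) j t" for j t
  proof -
    have "j = 0 \<or> x (j - 1) < q j" using x[of "j - 1"] \<open>j \<le> m\<close> by (cases j) auto
    moreover have "j = m \<or> q j < x j" using x[of j] \<open>j \<le> m\<close> by (cases "j = m") auto
    ultimately have q_gap: "in_gap x m (q m) j (q j)"
      unfolding in_gap_def using q_le[of j m] \<open>j \<le> m\<close> by blast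
    have no_root: "poly f s \<noteq> 0" if "in_gap x m (q m) j s" for s
    proof
      assume "poly f s = 0"
      then have "s \<in> S" using roots by blast
      moreover have "s \<notin> R" using R[of s] that unfolding in_gap_def by auto
      ultimately have "s \<in> x ` {..<m}" unfolding S_def by blast
      then show False
        using that not_in_gap_point[of m x] x_mono \<open>j \<le> m\<close> by auto
    qed
    have "poly f t * poly f (q j) > 0"
    proof (cases "t \<le> q j")
      case True
      then show ?thesis using no_root in_gap_between[OF t q_gap]
        by (intro poly_same_sign_if_no_root_between) auto
    next
      case False
      then have "poly f (q j) * poly f t > 0" using no_root in_gap_between[OF q_gap t]
        by (intro poly_same_sign_if_no_root_between) auto
      then show ?thesis by (simp add: mult.commute)
    qed
    then show ?thesis
      using q_sign[OF \<open>j \<le> m\<close>] by (auto simp: zero_less_mult_iff mult_less_0_iff)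
  qed
  have "signed_roots_below f (q m) m x"
    unfolding signed_roots_below_def using x x_below x_mono gap_sign by auto
  then show ?thesis using that x \<open>real_rooted f\<close> by auto
qed

lemma degree_W_le_and_coeff_W:
  "degree (W a b c d n) \<le> n \<and> coeff (W a b c d n) n = a ^ (n - 1)"
proof (induction a b c d n rule: W.induct)
  case (3 a b c d n)
  let ?p = "W a b c d (Suc n)" and ?q = "W a b c d n"
  have deg: "degree ?p \<le> Suc n" "degree ?q \<le> n" and lc: "coeff ?p (Suc n) = a ^ n"
    using 3 by auto
  have "degree [:b, a:] \<le> 1" "degree [:d, c:] \<le> 1"
    by (simp_all add: degree_pCons_eq_if)
  then have "degree ([:b, a:] * ?p) \<le> Suc (Suc n)" "degree ([:d, c:] * ?q) \<le> Suc (Suc n)"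
    using degree_mult_le[of "[:b, a:]" ?p] degree_mult_le[of "[:d, c:]" ?q] deg by linarith+
  then have "degree (W a b c d (Suc (Suc n))) \<le> Suc (Suc n)"
    unfolding W.simps(3) by (rule degree_add_le)
  moreover have "coeff ?p (Suc (Suc n)) = 0" "coeff ?q (Suc n) = 0" "coeff ?q (Suc (Suc n)) = 0"
    using deg by (auto intro: coeff_eq_0)
  then have "coeff (W a b c d (Suc (Suc n))) (Suc (Suc n)) = a ^ Suc n"
    using lc by (simp add: mult_pCons_left)
  ultimately show ?case by simp
qed auto

lemma degree_W: "a \<noteq> 0 \<Longrightarrow> degree (W a b c d n) = n"
  using degree_W_le_and_coeff_W[of a b c d n] by (metis le_antisym le_degree power_not_zero)

lemma lead_coeff_W: "a \<noteq> 0 \<Longrightarrow> lead_coeff (W a b c d n) = a ^ (n - 1)"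
  using degree_W_le_and_coeff_W degree_W by metis

lemma poly_W_Suc_Suc:
  "poly (W a b c d (Suc (Suc n))) t =
     (a * t + b) * poly (W a b c d (Suc n)) t + (c * t + d) * poly (W a b c d n) t"
  by (simp add: algebra_simps)

lemma poly_W_at_root_of_B:
  "n \<ge> 1 \<Longrightarrow> c * z + d = 0 \<Longrightarrow> poly (W a b c d n) z = (a * z + b) ^ (n - 1) * z"
proof (induction a b c d n rule: W.induct)
  case (3 a b c d n)
  then show ?case using poly_W_Suc_Suc[of a b c d n z] by (cases n) auto
qed auto

declare W.simps(3) [simp del]

lemma linear_recurrence_pos:
  fixes u :: "nat \<Rightarrow> real"
  assumes rec: "\<And>k. u (Suc (Suc k)) = h * u (Suc k) + D * u k"
    and "h > 0" and "D \<ge> 0" and "u 0 > 0" and "u 1 > 0"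
  shows "u k > 0"
proof -
  have "u k > 0 \<and> u (Suc k) > 0" for k
  proof (induction k)
    case (Suc k)
    then show ?case
      using rec[of k] \<open>h > 0\<close> \<open>D \<ge> 0\<close> by (simp add: add_pos_nonneg)
  qed (use assms in simp)
  then show ?thesis by blast
qed

lemma sign_W_at_twice_root_B:
  fixes a b c d :: real
  assumes "a < 0" and "b < 0" and "d < 0"
    and c_ge: "2 * a * d \<le> c" and c_gt: "2 * (-d + (1 - b)^2) / (-b) < c"
    and "k \<ge> 2"
  shows "(-1) ^ k * poly (W a b c d k) (-2 * d / c) > 0"
proof -
  define p where "p = -2 * d / c"
  define h where "h = -(a * p + b)"
  define D where "D = -d"
  define v where "v k = (-1) ^ k * poly (W a b c d k) p" for k
  have "c > 0" using c_ge \<open>a < 0\<close> \<open>d < 0\<close> mult_neg_neg[of a d] by linarith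
  then have "p > 0" and cp: "c * p = 2 * D" and "D > 0"
    using \<open>d < 0\<close> by (auto simp: p_def D_def divide_neg_pos)
  have "-a * p \<le> 1" using c_ge \<open>c > 0\<close> by (simp add: p_def divide_le_eq)
  then have h_bounds: "-b \<le> h" "h \<le> 1 - b"
    using \<open>a < 0\<close> \<open>p > 0\<close> mult_neg_pos[of a p] by (auto simp: h_def)
  have v_rec: "v (Suc (Suc k)) = h * v (Suc k) + D * v k" for k
  proof -
    have rec: "poly (W a b c d (Suc (Suc k))) p
        = (a * p + b) * poly (W a b c d (Suc k)) p - d * poly (W a b c d k) p"
      using poly_W_Suc_Suc[of a b c d k p] cp by (simp add: D_def algebra_simps)
    show ?thesis unfolding v_def h_def D_def rec by (simp add: algebra_simps)
  qed
  have "v 0 = 1" and "v 1 = -p" by (simp_all add: v_def)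
  then have v2: "v 2 = D - h * p"
    using v_rec[of 0] by (simp add: numeral_2_eq_2)
  have v3_rec: "v 3 = h * v 2 + D * v 1"
    using v_rec[of "Suc 0"] by (simp add: numeral_2_eq_2 numeral_3_eq_3)
  have "-b > 0" using \<open>b < 0\<close> by simp
  (* the lower bound on c is exactly what makes v 3 positive *)
  have c_bound: "2 * (D + (1 - b)^2) < -b * c"
    using c_gt unfolding pos_divide_less_eq[OF \<open>-b > 0\<close>] by (simp add: D_def mult.commute)
  have "p * (D + h^2) \<le> p * (D + (1 - b)^2)"
    using h_bounds \<open>b < 0\<close> \<open>p > 0\<close> by (intro mult_left_mono add_left_mono power_mono) auto
  also have "\<dots> = D * (2 * (D + (1 - b)^2)) / c"
    by (simp add: p_def D_def)
  also have "\<dots> < D * (-b)"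
    using mult_strict_left_mono[OF c_bound \<open>D > 0\<close>] \<open>c > 0\<close>
    by (simp add: pos_divide_less_eq algebra_simps)
  also have "\<dots> \<le> h * D"
    using mult_left_mono[OF h_bounds(1), of D] \<open>D > 0\<close> by (simp add: mult.commute)
  finally have "v 3 > 0"
    unfolding v3_rec v2 \<open>v 1 = -p\<close> by (simp add: algebra_simps power2_eq_square)
  moreover have "v 2 > 0"
  proof -
    have "h * v 2 = v 3 + D * p" using v3_rec \<open>v 1 = -p\<close> by simp
    then have "h * v 2 > 0" using \<open>v 3 > 0\<close> mult_pos_pos[OF \<open>D > 0\<close> \<open>p > 0\<close>] by linarith
    then show ?thesis using h_bounds \<open>b < 0\<close> by (simp add: zero_less_mult_iff)
  qed
  ultimately have "v (j + 2) > 0" for j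
    using linear_recurrence_pos[of "\<lambda>j. v (j + 2)" h D] v_rec h_bounds \<open>b < 0\<close> \<open>D > 0\<close>
    by (simp add: numeral_2_eq_2 numeral_3_eq_3)
  then show ?thesis using \<open>k \<ge> 2\<close> le_add_diff_inverse2[OF \<open>k \<ge> 2\<close>] v_def p_def by metis
qed

locale W_alternating_at =
  fixes a b c d p :: real
  assumes a_neg: "a < 0" and b_neg: "b < 0" and d_neg: "d < 0" and c_pos: "c > 0"
    and root_B_less: "-d / c < p"
    and sign_W_at_p: "\<And>k. k \<ge> 2 \<Longrightarrow> (-1) ^ k * poly (W a b c d k) p > 0"
begin

abbreviation root_B :: real where "root_B \<equiv> -d / c"

lemma B_root_B: "c * root_B + d = 0"
  using c_pos by simp

lemma B_neg_below_root_B: "t < root_B \<Longrightarrow> c * t + d < 0"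
  using mult_strict_left_mono[of t root_B c] c_pos B_root_B by linarith

lemma root_B_pos: "root_B > 0"
  using c_pos d_neg by (simp add: divide_neg_pos)

lemma sign_W_at_root_B:
  assumes "k \<ge> 1"
  shows "(-1) ^ (k - 1) * poly (W a b c d k) root_B > 0"
proof -
  have "(-1) ^ (k - 1) * poly (W a b c d k) root_B = (-1) ^ (k - 1) * ((a * root_B + b) ^ (k - 1) * root_B)"
    by (simp only: poly_W_at_root_of_B[OF assms B_root_B])
  also have "\<dots> = (-(a * root_B + b)) ^ (k - 1) * root_B"
    by (simp only: power_minus[of "a * root_B + b"] mult.assoc)
  also have "\<dots> > 0"
    using mult_neg_pos[OF a_neg root_B_pos] b_neg root_B_pos
    by (intro mult_pos_pos zero_less_power) linarith+
  finally show ?thesis .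
qed

lemma W_eventually_sign_at_top:
  assumes "k \<ge> 1"
  obtains N where "\<And>x. x \<ge> N \<Longrightarrow> (-1) ^ (k - 1) * poly (W a b c d k) x > 0"
proof -
  have "lead_coeff (smult ((-1) ^ (k - 1)) (W a b c d k)) = (-a) ^ (k - 1)"
    using lead_coeff_W[of a b c d k] a_neg by (simp add: power_minus[of a])
  then show ?thesis
    using poly_eventually_pos_at_top[of "smult ((-1) ^ (k - 1)) (W a b c d k)"] a_neg that by auto
qed

lemma W_neg_below:
  assumes "k \<ge> 1"
  obtains L where "L < M" and "poly (W a b c d k) L < 0"
proof -
  have "lead_coeff (- W a b c d k) * (-1) ^ degree (- W a b c d k) = (-a) ^ (k - 1)"
    using lead_coeff_W[of a b c d k] degree_W[of a b c d k] a_neg assms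
    by (cases k) (auto simp: power_minus[of a])
  then obtain N where "\<And>x. x \<le> N \<Longrightarrow> poly (W a b c d k) x < 0"
    using poly_eventually_pos_at_bot[of "- W a b c d k"] a_neg by auto
  then show ?thesis using that[of "min N (M - 1)"] by auto
qed

lemma two_roots_above_root_B:
  assumes "k \<ge> 2"
  obtains r1 r2 where "root_B < r1" "r1 < r2" "poly (W a b c d k) r1 = 0" "poly (W a b c d k) r2 = 0"
proof -
  let ?f = "W a b c d k"
  obtain j where j: "k = Suc j" using assms by (cases k) auto
  have at_root_B: "(-1) ^ j * poly ?f root_B > 0" and at_p: "(-1) ^ Suc j * poly ?f p > 0"
    using sign_W_at_root_B[of k] sign_W_at_p[OF assms] assms j by auto
  obtain r1 where r1: "root_B < r1" "r1 < p" "poly ?f r1 = 0"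
    using poly_IVT[OF root_B_less mult_neg_if_alternating_signs[OF at_root_B at_p]] by auto
  obtain N where "\<And>x. x \<ge> N \<Longrightarrow> (-1) ^ j * poly ?f x > 0"
    using W_eventually_sign_at_top[of k] j by auto
  then have at_R: "(-1) ^ j * poly ?f (max N (p + 1)) > 0" by simp
  have "poly ?f p * poly ?f (max N (p + 1)) < 0"
    using mult_neg_if_alternating_signs[OF at_R at_p] by (simp add: mult.commute)
  moreover have "p < max N (p + 1)" by simp
  ultimately obtain r2 where "p < r2" "poly ?f r2 = 0"
    using poly_IVT by blast
  then show ?thesis using that[of r1 r2] r1 by simp
qed

lemma signed_roots_below_W_if_alternating:
  fixes q :: "nat \<Rightarrow> real"
  assumes "q n = root_B"
    and "\<And>i j. i < j \<Longrightarrow> j \<le> n \<Longrightarrow> q i < q j"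
    and "\<And>j. j \<le> n \<Longrightarrow> (-1) ^ (j + 1) * poly (W a b c d (Suc (Suc n))) (q j) > 0"
  obtains z where "signed_roots_below (W a b c d (Suc (Suc n))) root_B n z"
    and "\<And>j. j < n \<Longrightarrow> q j < z j \<and> z j < q (Suc j)"
    and "real_rooted (W a b c d (Suc (Suc n)))"
proof -
  obtain r1 r2 where r: "root_B < r1" "r1 < r2"
    "poly (W a b c d (Suc (Suc n))) r1 = 0" "poly (W a b c d (Suc (Suc n))) r2 = 0"
    using two_roots_above_root_B[of "Suc (Suc n)"] by auto
  have "W a b c d (Suc (Suc n)) \<noteq> 0" and card: "card {r1, r2} + n = degree (W a b c d (Suc (Suc n)))"
    using degree_W[of a b c d "Suc (Suc n)"] a_neg r(2) by auto
  moreover have "\<And>r. r \<in> {r1, r2} \<Longrightarrow> q n < r \<and> poly (W a b c d (Suc (Suc n))) r = 0"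
    using assms(1) r by auto
  ultimately obtain z where "signed_roots_below (W a b c d (Suc (Suc n))) (q n) n z"
    "\<And>j. j < n \<Longrightarrow> q j < z j \<and> z j < q (Suc j)" "real_rooted (W a b c d (Suc (Suc n)))"
    using signed_roots_below_if_alternating[of _ "{r1, r2}" n q] assms(2,3) by blast
  then show ?thesis using that[of z] assms(1) by simp
qed

lemma sign_W_Suc_Suc_at_root_of_W_Suc:
  assumes "t < root_B" and "poly (W a b c d (Suc n)) t = 0"
    and "(-1) ^ k * poly (W a b c d n) t > 0"
  shows "(-1) ^ Suc k * poly (W a b c d (Suc (Suc n))) t > 0"
proof -
  have "(-1) ^ Suc k * poly (W a b c d (Suc (Suc n))) t
      = (-(c * t + d)) * ((-1) ^ k * poly (W a b c d n) t)"
    using poly_W_Suc_Suc[of a b c d n t] assms(2) by (simp add: algebra_simps)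
  then show ?thesis using assms(3) B_neg_below_root_B[OF assms(1)] by simp
qed

lemma signed_roots_below_W_step:
  assumes "n \<ge> 1"
    and y: "signed_roots_below (W a b c d (Suc n)) root_B (n - 1) y"
    and alt: "\<And>i. i < n - 1 \<Longrightarrow> (-1) ^ (i + 1) * poly (W a b c d n) (y i) > 0"
  obtains z where "signed_roots_below (W a b c d (Suc (Suc n))) root_B n z"
    and "\<And>j. j < n \<Longrightarrow> (-1) ^ (j + 1) * poly (W a b c d (Suc n)) (z j) > 0"
    and "real_rooted (W a b c d (Suc (Suc n)))"
proof -
  have y_roots: "\<And>i. i < n - 1 \<Longrightarrow> y i < root_B \<and> poly (W a b c d (Suc n)) (y i) = 0"
    and y_mono: "\<And>i j. i < j \<Longrightarrow> j < n - 1 \<Longrightarrow> y i < y j"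
    and y_gap: "\<And>j t. j \<le> n - 1 \<Longrightarrow> in_gap y (n - 1) root_B j t \<Longrightarrow>
                  (-1) ^ (j + 1) * poly (W a b c d (Suc n)) t > 0"
    using y unfolding signed_roots_below_def by auto
  obtain L where L: "L < min root_B (y 0)" "poly (W a b c d (Suc (Suc n))) L < 0"
    by (rule W_neg_below[of "Suc (Suc n)" "min root_B (y 0)"]) (simp, blast)
  have L_below: "L < y i" if "i < n - 1" for i
    using L y_mono[of 0 i] that by (cases i) auto
  define q where "q j = (if j = 0 then L else if j = n then root_B else y (j - 1))" for j
  have q_mono: "q i < q j" if "i < j" "j \<le> n" for i j
    using that L L_below[of "j - 1"] y_roots[of "i - 1"] y_mono[of "i - 1" "j - 1"]
    by (auto simp: q_def)
  have q_sign: "(-1) ^ (j + 1) * poly (W a b c d (Suc (Suc n))) (q j) > 0" if j_le: "j \<le> n" for j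
  proof -
    consider "j = 0" | "j = n" | "0 < j" "j < n" using j_le by linarith
    then show ?thesis
    proof cases
      case 3
      then have "(-1) ^ Suc (j - 1 + 1) * poly (W a b c d (Suc (Suc n))) (y (j - 1)) > 0"
        using y_roots[of "j - 1"] alt[of "j - 1"]
        by (intro sign_W_Suc_Suc_at_root_of_W_Suc) auto
      then show ?thesis using 3 by (simp add: q_def)
    qed (use L sign_W_at_root_B[of "Suc (Suc n)"] \<open>n \<ge> 1\<close> in \<open>auto simp: q_def\<close>)
  qed
  have "q n = root_B" using \<open>n \<ge> 1\<close> by (simp add: q_def)
  then obtain z where z: "signed_roots_below (W a b c d (Suc (Suc n))) root_B n z"
    "\<And>j. j < n \<Longrightarrow> q j < z j \<and> z j < q (Suc j)" "real_rooted (W a b c d (Suc (Suc n)))"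
    using signed_roots_below_W_if_alternating[of q n] q_mono q_sign by blast
  have "in_gap y (n - 1) root_B j (z j)" if "j < n" for j
  proof -
    have "Suc j = n \<or> j < n - 1" using that by linarith
    then show ?thesis
      using z(2)[OF that] y_roots[of j] unfolding in_gap_def q_def by (auto split: if_splits)
  qed
  then show ?thesis using that z y_gap by auto
qed

lemma real_rooted_W_and_signed_roots_below:
  "n \<ge> 1 \<Longrightarrow> real_rooted (W a b c d (Suc n)) \<and>
     (\<exists>y. signed_roots_below (W a b c d (Suc n)) root_B (n - 1) y \<and>
          (\<forall>i < n - 1. (-1) ^ (i + 1) * poly (W a b c d n) (y i) > 0))"
proof (induction n rule: nat_induct_at_least)
  case base
  have "(-1) ^ (0 + 1) * poly (W a b c d (Suc (Suc 0))) root_B > 0"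
    using sign_W_at_root_B[of 2] by (simp add: numeral_2_eq_2)
  then show ?case
    using signed_roots_below_W_if_alternating[of "\<lambda>_. root_B" 0] by auto
next
  case (Suc n)
  then show ?case using signed_roots_below_W_step[of n] by (metis diff_Suc_1)
qed

lemma real_rooted_W: "real_rooted (W a b c d n)"
proof (cases "n \<ge> 2")
  case True
  then show ?thesis
    using real_rooted_W_and_signed_roots_below[of "n - 1"] by (simp add: Suc_diff_1)
next
  case False
  then have "n = 0 \<or> n = 1" by auto
  then show ?thesis by (auto simp: real_rooted_def map_poly_pCons)
qed

end

theorem theorem5p1:
  fixes a b d :: real
  assumes "a < 0" and "b < 0" and "d < 0"
  shows "\<exists>cstar::real. \<forall>c::real. c > cstar \<longrightarrow> c \<noteq> 0 \<longrightarrow> (\<forall>n. real_rooted (W a b c d n))"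
proof (intro exI[of _ "max (2 * a * d) (2 * (-d + (1 - b)^2) / (-b))"] allI impI)
  fix c :: real and n :: nat
  assume c: "max (2 * a * d) (2 * (-d + (1 - b)^2) / (-b)) < c"
  have "a * d > 0" using assms by (simp add: mult_neg_neg)
  then have "c > 0" using c by linarith
  interpret W_alternating_at a b c d "-2 * d / c"
    using assms \<open>c > 0\<close> c sign_W_at_twice_root_B[of a b d c]
    by unfold_locales (auto simp: divide_strict_right_mono)
  show "real_rooted (W a b c d n)" by (rule real_rooted_W)
qed

end
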